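(* Let $d\geq 2$ and $U=(u_{ij})_{i,j=1}^d\in\mathcal{U}_d(\mathbb{C})$. The following two conditions are equivalent: (H1) there exist $M\in\mathbb{N}$ and $D_1,\dots,D_{2M}\in\mathcal{DU}_d(\mathbb{C})$ such that $D_1U^\dagger D_2UD_3U^\dagger D_4U\cdots D_{2M-1}U^\dagger D_{2M}U$ is a matrix with all entries non-zero; (H2) there exists $M\in\mathbb{N}$ such that $(P_U^TP_U)^M$ is a matrix with all entries non-zero.
   Context: $\mathcal{U}_d(\mathbb{C})$ denotes the group of $d\times d$ unitary matrices and $\mathcal{DU}_d(\mathbb{C})$ its subgroup of diagonal unitary matrices $\sum_i u_{ii}|i\rangle\langle i|$ with $|u_{ii}|=1$. $P_U=(p_{ij})$ is the $0/1$ matrix with $p_{ij}=0$ if $u_{ij}=0$ and $p_{ij}=1$ if $u_{ij}\neq 0$. *)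

theory Defs
  imports "HOL-Analysis.Analysis"
begin

definition cadjoint :: "complex^'n^'n \<Rightarrow> complex^'n^'n" where
  "cadjoint A = (\<chi> i j. cnj (A $ j $ i))"

definition unitary :: "complex^'n^'n \<Rightarrow> bool" where
  "unitary U \<longleftrightarrow> U ** cadjoint U = mat 1 \<and> cadjoint U ** U = mat 1"

definition diag_unitary :: "complex^'n^'n \<Rightarrow> bool" where
  "diag_unitary D \<longleftrightarrow> (\<forall>i j. i \<noteq> j \<longrightarrow> D $ i $ j = 0) \<and> (\<forall>i. norm (D $ i $ i) = 1)"

primrec matpow :: "'a::semiring_1^'n^'n \<Rightarrow> nat \<Rightarrow> 'a^'n^'n" where
  "matpow A 0 = mat 1"
| "matpow A (Suc m) = matpow A m ** A"

primrec word_H1 :: "(nat \<Rightarrow> complex^'n^'n) \<Rightarrow> complex^'n^'n \<Rightarrow> nat \<Rightarrow> complex^'n^'n" where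
  "word_H1 D U 0 = mat 1"
| "word_H1 D U (Suc m) =
     word_H1 D U m ** (D (2*m+1) ** cadjoint U ** D (2*m+2) ** U)"

definition pattern :: "complex^'n^'n \<Rightarrow> nat^'n^'n" where
  "pattern U = (\<chi> i j. if U $ i $ j = 0 then 0 else 1)"

definition all_nonzero :: "'a::zero^'n^'n \<Rightarrow> bool" where
  "all_nonzero A \<longleftrightarrow> (\<forall>i j. A $ i $ j \<noteq> 0)"

end

theory Submission
  imports Defs
begin

text \<open>The nonzero pattern of a product is contained in the relational composition of the
  patterns of the factors, with equality when no cancellation can occur: for entries in \<open>\<nat>\<close>,
  or when a diagonal unitary matrix with generic phases is inserted between the factors, since
  each entry is then a nontrivial linear form in the phases and the unit circle is infinite.
  Diagonal unitaries do not change patterns and \<open>U\<^sup>\<dagger>\<close> has the converse pattern of \<open>U\<close>, so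
  the pattern of \<open>D\<^sub>1 U\<^sup>\<dagger> D\<^sub>2 U \<cdots> D\<^sub>2\<^sub>M U\<close> is contained in, and for generic phases
  equal to, the \<open>M\<close>-th power of \<open>R\<inverse> O R\<close>, \<open>R\<close> the pattern of \<open>U\<close>; and that power is
  exactly the pattern of \<open>(P\<^sub>U\<^sup>T P\<^sub>U)\<^sup>M\<close>.\<close>

lemma infinite_unit_circle: "infinite (sphere (0::complex) 1)"
proof -
  have "uncountable (sphere (0::complex) 1)"
    by (rule connected_uncountable[of _ 1 "-1"]) (auto intro: connected_sphere)
  then show ?thesis
    using countable_finite by blast
qed

lemma linear_forms_nonvanishing_point:
  fixes c :: "'r \<Rightarrow> 'k \<Rightarrow> 'a::field"
  assumes "finite S" "finite R" "infinite T"
  shows "\<exists>x. (\<forall>k. x k \<in> T) \<and>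
           (\<forall>r\<in>R. (\<exists>k\<in>S. c r k \<noteq> 0) \<longrightarrow> (\<Sum>k\<in>S. c r k * x k) \<noteq> 0)"
  using assms(1)
proof (induction S rule: finite_induct)
  case empty
  obtain t where "t \<in> T"
    using assms(3) infinite_imp_nonempty by blast
  then show ?case
    by (intro exI[of _ "\<lambda>_. t"]) simp
next
  case (insert a S)
  then obtain x where x_in: "\<forall>k. x k \<in> T"
    and x_nz: "\<forall>r\<in>R. (\<exists>k\<in>S. c r k \<noteq> 0) \<longrightarrow> (\<Sum>k\<in>S. c r k * x k) \<noteq> 0"
    by blast
  define bad where "bad = (\<lambda>r. - (\<Sum>k\<in>S. c r k * x k) / c r a) ` {r\<in>R. c r a \<noteq> 0}"
  have "finite bad"
    unfolding bad_def using assms(2) by simp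
  then have "infinite (T - bad)"
    using assms(3) by (rule Diff_infinite_finite)
  then obtain t where t: "t \<in> T" "t \<notin> bad"
    using infinite_imp_nonempty by blast
  have sum_insert: "(\<Sum>k\<in>insert a S. c r k * (x(a := t)) k) = c r a * t + (\<Sum>k\<in>S. c r k * x k)"
    for r
  proof -
    have "(\<Sum>k\<in>S. c r k * (x(a := t)) k) = (\<Sum>k\<in>S. c r k * x k)"
      using insert.hyps(2) by (intro sum.cong) auto
    then show ?thesis
      using insert.hyps by simp
  qed
  have "(\<Sum>k\<in>insert a S. c r k * (x(a := t)) k) \<noteq> 0"
    if "r \<in> R" "\<exists>k\<in>insert a S. c r k \<noteq> 0" for r
  proof (cases "c r a = 0")
    case True
    then show ?thesis
      using that x_nz sum_insert by auto
  next
    case False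
    show ?thesis
      unfolding sum_insert
    proof
      assume "c r a * t + (\<Sum>k\<in>S. c r k * x k) = 0"
      then have "t = - (\<Sum>k\<in>S. c r k * x k) / c r a"
        using False by (metis add_eq_0_iff2 nonzero_mult_div_cancel_left)
      then show False
        using t(2) False \<open>r \<in> R\<close> unfolding bad_def by blast
    qed
  qed
  then show ?case
    using x_in t(1) by (intro exI[of _ "x(a := t)"]) auto
qed

definition matrix_support :: "'a::zero^'n^'m \<Rightarrow> ('m \<times> 'n) set" where
  "matrix_support A = {(i, j). A $ i $ j \<noteq> 0}"

definition diag_matrix :: "('n \<Rightarrow> 'a::zero) \<Rightarrow> 'a^'n^'n" where
  "diag_matrix x = (\<chi> i j. if i = j then x i else 0)"

lemma all_nonzero_iff_matrix_support: "all_nonzero A \<longleftrightarrow> matrix_support A = UNIV"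
  by (auto simp: all_nonzero_def matrix_support_def)

lemma matrix_support_transpose: "matrix_support (transpose A) = (matrix_support A)\<inverse>"
  by (auto simp: matrix_support_def transpose_def)

lemma matrix_support_cadjoint: "matrix_support (cadjoint A) = (matrix_support A)\<inverse>"
  by (auto simp: matrix_support_def cadjoint_def)

lemma matrix_support_pattern: "matrix_support (pattern U) = matrix_support U"
  by (auto simp: matrix_support_def pattern_def)

lemma matrix_support_mat_1: "matrix_support (mat 1 :: 'a::zero_neq_one^'n^'n) = Id"
  by (auto simp: matrix_support_def mat_def)

lemma matrix_support_mult_subset:
  "matrix_support (A ** B) \<subseteq> matrix_support A O matrix_support B"
proof
  fix p assume "p \<in> matrix_support (A ** B)"
  then obtain i j where "p = (i, j)" "(\<Sum>k\<in>UNIV. A $ i $ k * B $ k $ j) \<noteq> 0"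
    by (auto simp: matrix_support_def matrix_matrix_mult_def)
  then obtain k where "A $ i $ k * B $ k $ j \<noteq> 0"
    by (meson sum.neutral)
  then show "p \<in> matrix_support A O matrix_support B"
    using \<open>p = (i, j)\<close> by (auto simp: matrix_support_def intro: relcompI[where b = k])
qed

lemma matrix_support_mult_no_cancel:
  fixes A :: "'a::{canonically_ordered_monoid_add, semiring_1, semiring_no_zero_divisors}^'n^'m"
  shows "matrix_support (A ** B) = matrix_support A O matrix_support B"
proof (intro subset_antisym matrix_support_mult_subset subrelI)
  fix i j assume "(i, j) \<in> matrix_support A O matrix_support B"
  then obtain k where "A $ i $ k * B $ k $ j \<noteq> 0"
    by (auto simp: matrix_support_def)
  then have "(\<Sum>k\<in>UNIV. A $ i $ k * B $ k $ j) \<noteq> 0"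
    by (simp add: sum_eq_0_iff) blast
  then show "(i, j) \<in> matrix_support (A ** B)"
    by (simp add: matrix_support_def matrix_matrix_mult_def)
qed

lemma matrix_support_matpow:
  fixes A :: "'a::{canonically_ordered_monoid_add, semiring_1, semiring_no_zero_divisors}^'n^'n"
  shows "matrix_support (matpow A m) = matrix_support A ^^ m"
  by (induction m) (simp_all add: matrix_support_mat_1 matrix_support_mult_no_cancel)

lemma matrix_mult_diag_left:
  assumes "\<forall>i j. i \<noteq> j \<longrightarrow> D $ i $ j = 0"
  shows "(D ** A) $ i $ j = D $ i $ i * A $ i $ j"
proof -
  have "(D ** A) $ i $ j = (\<Sum>k\<in>UNIV. D $ i $ k * A $ k $ j)"
    by (simp add: matrix_matrix_mult_def)
  also have "\<dots> = (\<Sum>k\<in>UNIV. if k = i then D $ i $ i * A $ i $ j else 0)"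
    by (rule sum.cong) (auto simp: assms)
  finally show ?thesis
    by simp
qed

lemma matrix_mult_diag_right:
  assumes "\<forall>i j. i \<noteq> j \<longrightarrow> D $ i $ j = 0"
  shows "(A ** D) $ i $ j = A $ i $ j * D $ j $ j"
proof -
  have "(A ** D) $ i $ j = (\<Sum>k\<in>UNIV. A $ i $ k * D $ k $ j)"
    by (simp add: matrix_matrix_mult_def)
  also have "\<dots> = (\<Sum>k\<in>UNIV. if k = j then A $ i $ j * D $ j $ j else 0)"
    by (rule sum.cong) (auto simp: assms)
  finally show ?thesis
    by simp
qed

lemma matrix_support_diag_unitary_mult:
  assumes "diag_unitary D"
  shows "matrix_support (D ** A) = matrix_support A"
    and "matrix_support (B ** D) = matrix_support B"
proof -
  have "D $ i $ i \<noteq> 0" for i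
    using assms unfolding diag_unitary_def by (metis norm_zero zero_neq_one)
  then show "matrix_support (D ** A) = matrix_support A" "matrix_support (B ** D) = matrix_support B"
    using assms unfolding diag_unitary_def matrix_support_def
    by (simp_all add: matrix_mult_diag_left matrix_mult_diag_right)
qed

lemma diag_unitary_diag_matrix: "(\<And>k. norm (x k) = 1) \<Longrightarrow> diag_unitary (diag_matrix x)"
  unfolding diag_unitary_def diag_matrix_def by simp

lemma matrix_support_mult_generic_diag:
  fixes A :: "complex^'n^'m" and B :: "complex^'p^'n"
  obtains D where "diag_unitary D"
    and "matrix_support (A ** D ** B) = matrix_support A O matrix_support B"
proof -
  obtain x where x_circle: "\<forall>k. x k \<in> sphere 0 1"
    and x_nz: "\<And>i j. (\<exists>k. A$i$k * B$k$j \<noteq> 0) \<Longrightarrow> (\<Sum>k\<in>UNIV. A$i$k * B$k$j * x k) \<noteq> 0"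
    using linear_forms_nonvanishing_point[of UNIV UNIV "sphere 0 1" "\<lambda>(i, j) k. A$i$k * B$k$j"]
      infinite_unit_circle by auto
  have D_unitary: "diag_unitary (diag_matrix x)"
    using x_circle by (simp add: diag_unitary_diag_matrix)
  have diag: "\<forall>i j. i \<noteq> j \<longrightarrow> diag_matrix x $ i $ j = 0"
    by (simp add: diag_matrix_def)
  have entry: "(A ** diag_matrix x ** B) $ i $ j = (\<Sum>k\<in>UNIV. A$i$k * B$k$j * x k)" for i j
    unfolding matrix_matrix_mult_def[of "A ** diag_matrix x" B]
    by (simp add: matrix_mult_diag_right[OF diag], intro sum.cong) (auto simp: diag_matrix_def)
  have "matrix_support A O matrix_support B \<subseteq> matrix_support (A ** diag_matrix x ** B)"
    using x_nz by (auto simp: matrix_support_def entry)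
  moreover have "matrix_support (A ** diag_matrix x) = matrix_support A"
    using D_unitary by (rule matrix_support_diag_unitary_mult(2))
  then have "matrix_support (A ** diag_matrix x ** B) \<subseteq> matrix_support A O matrix_support B"
    using matrix_support_mult_subset[of "A ** diag_matrix x" B] by simp
  ultimately show ?thesis
    using that[OF D_unitary] by blast
qed

lemma word_H1_cong:
  "(\<And>k. k \<in> {1..2*M} \<Longrightarrow> D k = D' k) \<Longrightarrow> word_H1 D U M = word_H1 D' U M"
  by (induction M) auto

lemma matrix_support_word_H1_subset:
  assumes "\<forall>k\<in>{1..2*M}. diag_unitary (D k)"
  shows "matrix_support (word_H1 D U M) \<subseteq> ((matrix_support U)\<inverse> O matrix_support U) ^^ M"
  using assms
proof (induction M)
  case 0
  then show ?case
    by (simp add: matrix_support_mat_1)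
next
  case (Suc m)
  have "diag_unitary (D (2*m+1))" "diag_unitary (D (2*m+2))"
    using Suc.prems by auto
  then have step: "matrix_support (D (2*m+1) ** cadjoint U ** D (2*m+2) ** U)
      \<subseteq> (matrix_support U)\<inverse> O matrix_support U"
    using matrix_support_mult_subset[of "D (2*m+1) ** cadjoint U ** D (2*m+2)" U]
    by (simp add: matrix_support_diag_unitary_mult matrix_support_cadjoint)
  have "matrix_support (word_H1 D U (Suc m))
      \<subseteq> matrix_support (word_H1 D U m) O matrix_support (D (2*m+1) ** cadjoint U ** D (2*m+2) ** U)"
    unfolding word_H1.simps by (rule matrix_support_mult_subset)
  also have "\<dots> \<subseteq> ((matrix_support U)\<inverse> O matrix_support U) ^^ m O ((matrix_support U)\<inverse> O matrix_support U)"
    using Suc step by (intro relcomp_mono) auto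
  finally show ?case
    by simp
qed

lemma matrix_support_word_H1_generic:
  obtains D where "\<forall>k\<in>{1..2*M}. diag_unitary (D k)"
    and "matrix_support (word_H1 D U M) = ((matrix_support U)\<inverse> O matrix_support U) ^^ M"
proof (induction M arbitrary: thesis)
  case 0
  then show ?case
    by (simp add: matrix_support_mat_1)
next
  case (Suc m)
  obtain D where D: "\<forall>k\<in>{1..2*m}. diag_unitary (D k)"
    and supp_W: "matrix_support (word_H1 D U m) = ((matrix_support U)\<inverse> O matrix_support U) ^^ m"
    using Suc.IH by blast
  let ?W = "word_H1 D U m"
  obtain E1 where E1: "diag_unitary E1"
    and supp_C: "matrix_support (?W ** E1 ** cadjoint U) = matrix_support ?W O (matrix_support U)\<inverse>"
    using matrix_support_mult_generic_diag by (metis matrix_support_cadjoint)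
  obtain E2 where E2: "diag_unitary E2"
    and supp_CU: "matrix_support (?W ** E1 ** cadjoint U ** E2 ** U)
                    = matrix_support (?W ** E1 ** cadjoint U) O matrix_support U"
    using matrix_support_mult_generic_diag by blast
  define D' where "D' = D(2*m+1 := E1, 2*m+2 := E2)"
  have "word_H1 D' U m = ?W"
    by (rule word_H1_cong) (auto simp: D'_def)
  then have "word_H1 D' U (Suc m) = ?W ** E1 ** cadjoint U ** E2 ** U"
    by (simp add: D'_def matrix_mul_assoc)
  then have "matrix_support (word_H1 D' U (Suc m))
      = ((matrix_support U)\<inverse> O matrix_support U) ^^ Suc m"
    using supp_CU supp_C supp_W by (simp add: O_assoc)
  moreover have "\<forall>k\<in>{1..2 * Suc m}. diag_unitary (D' k)"
    using D E1 E2 by (auto simp: D'_def)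
  ultimately show ?case
    using Suc.prems by blast
qed

theorem proposition8:
  fixes U :: "complex^'d^'d"
  assumes "CARD('d) \<ge> 2" and "unitary U"
  shows "(\<exists>M \<ge> 1. \<exists>D :: nat \<Rightarrow> complex^'d^'d.
            (\<forall>k \<in> {1..2*M}. diag_unitary (D k)) \<and> all_nonzero (word_H1 D U M))
     \<longleftrightarrow> (\<exists>M \<ge> 1. all_nonzero (matpow (transpose (pattern U) ** pattern U) M))"
proof -
  let ?R = "(matrix_support U)\<inverse> O matrix_support U"
  have pattern_power: "matrix_support (matpow (transpose (pattern U) ** pattern U) M) = ?R ^^ M"
    for M
    by (simp add: matrix_support_matpow matrix_support_mult_no_cancel matrix_support_transpose
        matrix_support_pattern)
  have "(\<exists>D. (\<forall>k \<in> {1..2*M}. diag_unitary (D k)) \<and> all_nonzero (word_H1 D U M))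
      \<longleftrightarrow> ?R ^^ M = UNIV" for M
  proof
    assume "\<exists>D. (\<forall>k \<in> {1..2*M}. diag_unitary (D k)) \<and> all_nonzero (word_H1 D U M)"
    then obtain D where "\<forall>k \<in> {1..2*M}. diag_unitary (D k)" "all_nonzero (word_H1 D U M)"
      by blast
    then have "UNIV \<subseteq> ?R ^^ M"
      using matrix_support_word_H1_subset by (metis all_nonzero_iff_matrix_support)
    then show "?R ^^ M = UNIV"
      by blast
  next
    assume "?R ^^ M = UNIV"
    moreover obtain D where "\<forall>k \<in> {1..2*M}. diag_unitary (D k)"
      and "matrix_support (word_H1 D U M) = ?R ^^ M"
      by (rule matrix_support_word_H1_generic)
    ultimately show "\<exists>D. (\<forall>k \<in> {1..2*M}. diag_unitary (D k)) \<and> all_nonzero (word_H1 D U M)"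
      by (auto simp: all_nonzero_iff_matrix_support)
  qed
  then show ?thesis
    by (simp add: pattern_power all_nonzero_iff_matrix_support)
qed

end
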